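(* Let $S$ be a linear subspace of $\mathbb{F}_2^n$ with basis $\xi^1,\dots,\xi^d$, and suppose that for every nonzero $m\in\mathbb{F}_2^d$ there is a position $j\in\{1,\dots,n\}$ with $(\xi^1_j,\dots,\xi^d_j)=m$. Let $Q:\mathbb{F}_2^n\to\mathbb{F}_2$ be a quadratic function. If there exist complex phases $c_1,\dots,c_n$ such that $(-1)^{Q(x)}=\prod_{j=1}^n c_j^{x_j}$ for every $x\in S$, then there exist $c'_1,\dots,c'_n\in\{\pm1,\pm i\}$ such that $(-1)^{Q(x)}=\prod_{j=1}^n (c'_j)^{x_j}$ for every $x\in S$.
   Context: A quadratic function $Q:\mathbb{F}_2^n\to\mathbb{F}_2$ is a polynomial of degree at most $2$ in the coordinates with coefficients in $\mathbb{F}_2$. Complex phases are complex numbers of modulus $1$; coordinates $x_j\in\{0,1\}$ are used as integer exponents. *)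

theory Defs
  imports "HOL-Analysis.Analysis"
begin

text \<open>Vectors of F_2^n are modelled as functions nat => bool (True = 1), vanishing outside {0..<n}.
  Addition in F_2 is exclusive or.\<close>

definition f2vecs :: "nat \<Rightarrow> (nat \<Rightarrow> bool) set" where
  "f2vecs n = {x. \<forall>j. n \<le> j \<longrightarrow> \<not> x j}"

definition bitval :: "bool \<Rightarrow> nat" where
  "bitval b = (if b then 1 else 0)"

text \<open>F_2-linear combination  sum_{k<d} m_k xi^k  (m :: F_2^d).\<close>
definition f2comb :: "nat \<Rightarrow> (nat \<Rightarrow> bool) \<Rightarrow> (nat \<Rightarrow> nat \<Rightarrow> bool) \<Rightarrow> (nat \<Rightarrow> bool)" where
  "f2comb d m xi = (\<lambda>j. odd (card {k. k < d \<and> m k \<and> xi k j}))"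

definition f2_lin_indep :: "nat \<Rightarrow> nat \<Rightarrow> (nat \<Rightarrow> nat \<Rightarrow> bool) \<Rightarrow> bool" where
  "f2_lin_indep n d xi \<longleftrightarrow>
     (\<forall>m \<in> f2vecs d. (\<forall>j<n. \<not> f2comb d m xi j) \<longrightarrow> (\<forall>k<d. \<not> m k))"

definition f2span :: "nat \<Rightarrow> (nat \<Rightarrow> nat \<Rightarrow> bool) \<Rightarrow> (nat \<Rightarrow> bool) set" where
  "f2span d xi = {f2comb d m xi | m. m \<in> f2vecs d}"

text \<open>Quadratic function F_2^n -> F_2: polynomial of degree at most 2 in the coordinates
  (using x_i^2 = x_i, the general such polynomial is c + sum a_i x_i + sum_{i<j} b_ij x_i x_j).
  Only values on F_2^n matter.\<close>
definition quadratic_f2 :: "nat \<Rightarrow> ((nat \<Rightarrow> bool) \<Rightarrow> bool) \<Rightarrow> bool" where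
  "quadratic_f2 n Q \<longleftrightarrow> (\<exists>(c::bool) (a::nat \<Rightarrow> bool) (b::nat \<Rightarrow> nat \<Rightarrow> bool).
     \<forall>x \<in> f2vecs n. Q x = odd (bitval c + (\<Sum>i<n. bitval (a i \<and> x i))
                         + (\<Sum>i<n. \<Sum>j<n. if i < j then bitval (b i j \<and> x i \<and> x j) else 0)))"

end

theory Submission
  imports Defs
begin

text \<open>Since x_i^2 = x_i over F_2, a quadratic function is, up to a constant, a sum of
  coordinates x_i and products x_i x_j. Each product satisfies
  (-1)^(x_i x_j) = i^(x_i) i^(x_j) (-i)^(x_i + x_j), and on S the function x_i + x_j is either
  identically 0 or equal to the coordinate x_l whose pattern (xi^1_l, ..., xi^d_l) is the sum of
  the patterns of i and j; such a position l exists by hypothesis. Hence (-1)^Q is a product of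
  quarter phases raised to coordinates, the constant term being forced to vanish by evaluating
  at x = 0.\<close>

definition quarter_phases :: "complex set" where
  "quarter_phases = {1, -1, \<i>, -\<i>}"

lemma quarter_phases_mult: "a \<in> quarter_phases \<Longrightarrow> b \<in> quarter_phases \<Longrightarrow> a * b \<in> quarter_phases"
  unfolding quarter_phases_def by auto

definition quarter_phase_representable ::
    "nat \<Rightarrow> (nat \<Rightarrow> bool) set \<Rightarrow> ((nat \<Rightarrow> bool) \<Rightarrow> complex) \<Rightarrow> bool" where
  "quarter_phase_representable n S f \<longleftrightarrow>
     (\<exists>c. (\<forall>l<n. c l \<in> quarter_phases) \<and> (\<forall>x\<in>S. f x = (\<Prod>l<n. c l ^ bitval (x l))))"

lemma bitval_simps [simp]: "bitval False = 0" "bitval True = 1"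
  by (auto simp: bitval_def)

lemma quarter_phase_representable_one: "quarter_phase_representable n S (\<lambda>x. 1)"
  unfolding quarter_phase_representable_def
  by (rule exI[of _ "\<lambda>_. 1"]) (auto simp: quarter_phases_def)

lemma quarter_phase_representable_mult:
  assumes "quarter_phase_representable n S f" "quarter_phase_representable n S g"
  shows "quarter_phase_representable n S (\<lambda>x. f x * g x)"
proof -
  obtain c1 where c1: "\<forall>l<n. c1 l \<in> quarter_phases" "\<forall>x\<in>S. f x = (\<Prod>l<n. c1 l ^ bitval (x l))"
    using assms(1) unfolding quarter_phase_representable_def by blast
  obtain c2 where c2: "\<forall>l<n. c2 l \<in> quarter_phases" "\<forall>x\<in>S. g x = (\<Prod>l<n. c2 l ^ bitval (x l))"
    using assms(2) unfolding quarter_phase_representable_def by blast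
  show ?thesis
    unfolding quarter_phase_representable_def
    using c1 c2 by (intro exI[of _ "\<lambda>l. c1 l * c2 l"])
      (auto simp: quarter_phases_mult power_mult_distrib prod.distrib)
qed

lemma quarter_phase_representable_cong:
  "quarter_phase_representable n S f \<Longrightarrow> (\<And>x. x \<in> S \<Longrightarrow> f x = g x) \<Longrightarrow>
   quarter_phase_representable n S g"
  unfolding quarter_phase_representable_def by metis

lemma quarter_phase_representable_prod:
  "finite A \<Longrightarrow> (\<And>a. a \<in> A \<Longrightarrow> quarter_phase_representable n S (f a)) \<Longrightarrow>
   quarter_phase_representable n S (\<lambda>x. \<Prod>a\<in>A. f a x)"
proof (induction A rule: finite_induct)
  case empty
  then show ?case by (simp add: quarter_phase_representable_one)
next
  case (insert a A)
  then show ?case by (simp add: quarter_phase_representable_mult)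
qed

lemma quarter_phase_representable_coordinate:
  assumes "l < n" "v \<in> quarter_phases"
  shows "quarter_phase_representable n S (\<lambda>x. v ^ bitval (x l))"
  unfolding quarter_phase_representable_def
proof (intro exI[of _ "\<lambda>k. if k = l then v else 1"] conjI ballI allI impI)
  fix k assume "k < n"
  then show "(if k = l then v else 1) \<in> quarter_phases"
    using assms by (auto simp: quarter_phases_def)
next
  fix x :: "nat \<Rightarrow> bool"
  have "(\<Prod>k<n. (if k = l then v else 1) ^ bitval (x k)) = (\<Prod>k<n. if k = l then v ^ bitval (x l) else 1)"
    by (rule prod.cong) auto
  then show "v ^ bitval (x l) = (\<Prod>k<n. (if k = l then v else 1) ^ bitval (x k))"
    using assms(1) by simp
qed

lemma neg_one_pow_bitval_and:
  "(-1::complex) ^ bitval (p \<and> q) = \<i> ^ bitval p * \<i> ^ bitval q * (-\<i>) ^ bitval (p \<noteq> q)"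
  by (cases p; cases q) (auto simp: bitval_def)

lemma neg_one_pow_bitval_odd: "(-1::complex) ^ bitval (odd N) = (-1) ^ N"
  by (auto simp: bitval_def)

lemma quarter_phase_representable_neg_one_pow_quadratic:
  assumes S: "S \<subseteq> f2vecs n"
    and quad: "quadratic_f2 n Q"
    and zero: "\<not> Q (\<lambda>_. False)"
    and xor: "\<And>i j. i < n \<Longrightarrow> j < n \<Longrightarrow>
                quarter_phase_representable n S (\<lambda>x. (-\<i>) ^ bitval (x i \<noteq> x j))"
  shows "quarter_phase_representable n S (\<lambda>x. (-1) ^ bitval (Q x))"
proof -
  obtain c0 a b where Q: "\<forall>x \<in> f2vecs n. Q x = odd (bitval c0 + (\<Sum>i<n. bitval (a i \<and> x i))
                         + (\<Sum>i<n. \<Sum>j<n. if i < j then bitval (b i j \<and> x i \<and> x j) else 0))"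
    using quad unfolding quadratic_f2_def by blast
  have "Q (\<lambda>_. False) = odd (bitval c0)"
    using Q by (simp add: f2vecs_def cong: if_cong)
  with zero have c0: "\<not> c0" by (auto simp: bitval_def)
  define L where "L x = (\<Prod>i<n. (-1::complex) ^ bitval (a i \<and> x i))" for x
  define B where "B x = (\<Prod>i<n. \<Prod>j<n. (-1::complex) ^ (if i < j then bitval (b i j \<and> x i \<and> x j) else 0))"
    for x
  have expand: "(-1::complex) ^ bitval (Q x) = L x * B x" if "x \<in> S" for x
  proof -
    have "Q x = odd ((\<Sum>i<n. bitval (a i \<and> x i))
                 + (\<Sum>i<n. \<Sum>j<n. if i < j then bitval (b i j \<and> x i \<and> x j) else 0))"
      using Q S that c0 by auto
    then show ?thesis
      unfolding L_def B_def by (simp only: neg_one_pow_bitval_odd power_add power_sum)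
  qed
  have "quarter_phase_representable n S L"
    unfolding L_def
  proof (rule quarter_phase_representable_prod)
    fix i assume "i \<in> {..<n}"
    then have "quarter_phase_representable n S (\<lambda>x. (-1) ^ bitval (x i))"
      by (intro quarter_phase_representable_coordinate) (auto simp: quarter_phases_def)
    then show "quarter_phase_representable n S (\<lambda>x. (-1::complex) ^ bitval (a i \<and> x i))"
      by (cases "a i") (auto intro: quarter_phase_representable_cong quarter_phase_representable_one)
  qed simp
  moreover have "quarter_phase_representable n S B"
    unfolding B_def
  proof (intro quarter_phase_representable_prod finite_lessThan)
    fix i j assume "i \<in> {..<n}" "j \<in> {..<n}"
    then have "quarter_phase_representable n S (\<lambda>x. (-1::complex) ^ bitval (x i \<and> x j))"
      unfolding neg_one_pow_bitval_and
      by (intro quarter_phase_representable_mult quarter_phase_representable_coordinate xor)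
        (auto simp: quarter_phases_def)
    then show "quarter_phase_representable n S
                 (\<lambda>x. (-1::complex) ^ (if i < j then bitval (b i j \<and> x i \<and> x j) else 0))"
      by (cases "i < j \<and> b i j")
        (auto intro: quarter_phase_representable_cong quarter_phase_representable_one)
  qed
  ultimately show ?thesis
    by (auto intro: quarter_phase_representable_cong[OF quarter_phase_representable_mult]
             simp: expand)
qed

lemma odd_card_sym_diff:
  assumes "finite A" "finite B"
  shows "odd (card ((A - B) \<union> (B - A))) \<longleftrightarrow> (odd (card A) \<noteq> odd (card B))"
proof -
  have "card ((A - B) \<union> (B - A)) = card (A - B) + card (B - A)"
    using assms by (intro card_Un_disjoint) auto
  moreover have "card A = card (A - B) + card (A \<inter> B)" "card B = card (B - A) + card (A \<inter> B)"
    using assms card_Int_Diff[of A B] card_Int_Diff[of B A] by (simp_all add: Int_commute)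
  ultimately show ?thesis by presburger
qed

lemma f2comb_xor_coordinate:
  assumes "\<forall>k<d. xi k l = (xi k i \<noteq> xi k j)"
  shows "f2comb d m xi l = (f2comb d m xi i \<noteq> f2comb d m xi j)"
proof -
  let ?A = "{k. k < d \<and> m k \<and> xi k i}" and ?B = "{k. k < d \<and> m k \<and> xi k j}"
  have "{k. k < d \<and> m k \<and> xi k l} = (?A - ?B) \<union> (?B - ?A)"
    using assms by auto
  then show ?thesis
    unfolding f2comb_def by (simp add: odd_card_sym_diff)
qed

lemma f2comb_in_f2vecs:
  assumes "\<forall>k<d. xi k \<in> f2vecs n"
  shows "f2comb d m xi \<in> f2vecs n"
proof -
  have "{k. k < d \<and> m k \<and> xi k j} = {}" if "n \<le> j" for j
    using assms that unfolding f2vecs_def by auto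
  then have "\<not> f2comb d m xi j" if "n \<le> j" for j
    using that unfolding f2comb_def by (metis card.empty even_zero)
  then show ?thesis
    unfolding f2vecs_def by simp
qed

lemma quarter_phase_representable_xor_on_span:
  assumes "i < n" "j < n"
    and all_patterns: "\<forall>m \<in> f2vecs d. (\<exists>k<d. m k) \<longrightarrow> (\<exists>j<n. \<forall>k<d. xi k j = m k)"
  shows "quarter_phase_representable n (f2span d xi) (\<lambda>x. (-\<i>) ^ bitval (x i \<noteq> x j))"
proof (cases "\<forall>k<d. xi k i = xi k j")
  case True
  have "{k. k < d \<and> m k \<and> xi k i} = {k. k < d \<and> m k \<and> xi k j}" for m
    using True by auto
  then have "f2comb d m xi i = f2comb d m xi j" for m
    unfolding f2comb_def by simp
  then show ?thesis
    by (intro quarter_phase_representable_cong[OF quarter_phase_representable_one])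
      (auto simp: f2span_def)
next
  case False
  define p where "p k = (k < d \<and> xi k i \<noteq> xi k j)" for k
  have "p \<in> f2vecs d" "\<exists>k<d. p k"
    using False unfolding p_def f2vecs_def by auto
  then obtain l where l: "l < n" "\<forall>k<d. xi k l = (xi k i \<noteq> xi k j)"
    using all_patterns unfolding p_def by fastforce
  have "quarter_phase_representable n (f2span d xi) (\<lambda>x. (-\<i>) ^ bitval (x l))"
    using l(1) by (intro quarter_phase_representable_coordinate) (auto simp: quarter_phases_def)
  then show ?thesis
    by (rule quarter_phase_representable_cong) (auto simp: f2span_def f2comb_xor_coordinate[OF l(2)])
qed

theorem mainTheorem4:
  fixes n d :: nat
    and xi :: "nat \<Rightarrow> nat \<Rightarrow> bool"
    and Q :: "(nat \<Rightarrow> bool) \<Rightarrow> bool"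
    and c :: "nat \<Rightarrow> complex"
  assumes basis_vecs: "\<forall>k<d. xi k \<in> f2vecs n"
    and basis_indep: "f2_lin_indep n d xi"
    and all_patterns: "\<forall>m \<in> f2vecs d. (\<exists>k<d. m k) \<longrightarrow> (\<exists>j<n. \<forall>k<d. xi k j = m k)"
    and quad: "quadratic_f2 n Q"
    and phases: "\<forall>j<n. norm (c j) = 1"
    and rep: "\<forall>x \<in> f2span d xi. (-1::complex) ^ bitval (Q x) = (\<Prod>j<n. c j ^ bitval (x j))"
  shows "\<exists>c'::nat \<Rightarrow> complex. (\<forall>j<n. c' j \<in> {1, -1, \<i>, -\<i>}) \<and>
           (\<forall>x \<in> f2span d xi. (-1::complex) ^ bitval (Q x) = (\<Prod>j<n. c' j ^ bitval (x j)))"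
proof -
  have span: "f2span d xi \<subseteq> f2vecs n"
    using basis_vecs f2comb_in_f2vecs unfolding f2span_def by blast
  have "f2comb d (\<lambda>_. False) xi = (\<lambda>_. False)"
    by (simp add: f2comb_def)
  then have "(\<lambda>_. False) \<in> f2span d xi"
    unfolding f2span_def f2vecs_def by force
  with rep have "\<not> Q (\<lambda>_. False)"
    by (force simp: bitval_def)
  with span quad have "quarter_phase_representable n (f2span d xi) (\<lambda>x. (-1) ^ bitval (Q x))"
    by (intro quarter_phase_representable_neg_one_pow_quadratic
        quarter_phase_representable_xor_on_span all_patterns)
  then show ?thesis
    unfolding quarter_phase_representable_def quarter_phases_def .
qed

end
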